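(* Let $\mathbf W_1,\mathbf W_2$ be independent $p$-dimensional standard Brownian motions and $\eta>0$. Define, for $1\le s\le t<\infty$, $$D_\eta(s,t)=t^{-\frac32-\eta}\|(t-s)\mathbf W_2(1)+t\mathbf W_1(s-1)-s\mathbf W_1(t-1)\|_{I_p}.$$ Then the function $D_\eta$ on $\{(s,t):1\le s\le t<\infty\}$ is almost surely bounded and uniformly continuous.
   Context: $\|\mathbf y\|_{I_p}=\sqrt{\mathbf y^\top\mathbf y/p}$ for $\mathbf y\in\mathbb R^p$. *)

theory Defs
  imports "HOL-Probability.Probability"
begin

definition normIp :: "real ^ 'n \<Rightarrow> real" where
  "normIp y = sqrt ((y \<bullet> y) / real CARD('n))"

definition indep_std_BMs :: "'a measure \<Rightarrow> 'i set \<Rightarrow> ('i \<Rightarrow> real \<Rightarrow> 'a \<Rightarrow> real) \<Rightarrow> bool" where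
  "indep_std_BMs M I B \<longleftrightarrow>
     prob_space M \<and>
     (\<forall>i\<in>I. \<forall>t\<ge>0. B i t \<in> borel_measurable M) \<and>
     (\<forall>i\<in>I. \<forall>\<omega>\<in>space M. B i 0 \<omega> = 0 \<and> continuous_on {0..} (\<lambda>t. B i t \<omega>)) \<and>
     (\<forall>(n::nat) (ts::nat \<Rightarrow> real). 0 \<le> ts 0 \<and> (\<forall>k<n. ts k < ts (Suc k)) \<longrightarrow>
        prob_space.indep_vars M (\<lambda>_. borel)
          (\<lambda>(i, k) \<omega>. B i (ts (Suc k)) \<omega> - B i (ts k) \<omega>) (I \<times> {..<n}) \<and>
        (\<forall>i\<in>I. \<forall>k<n. distributed M lborel (\<lambda>\<omega>. B i (ts (Suc k)) \<omega> - B i (ts k) \<omega>)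
            (normal_density 0 (sqrt (ts (Suc k) - ts k)))))"

text \<open>Two independent p-dimensional standard Brownian motions: all 2p coordinate
  processes are mutually independent standard Brownian motions.\<close>
definition indep_std_BM_pair :: "'a measure \<Rightarrow> (real \<Rightarrow> 'a \<Rightarrow> real ^ 'p) \<Rightarrow> (real \<Rightarrow> 'a \<Rightarrow> real ^ 'p) \<Rightarrow> bool" where
  "indep_std_BM_pair M W1 W2 \<longleftrightarrow>
     indep_std_BMs M (UNIV :: (bool \<times> 'p) set)
       (\<lambda>(j, i) t \<omega>. (if j then W2 t \<omega> else W1 t \<omega>) $ i)"

definition D_eta :: "real \<Rightarrow> (real \<Rightarrow> 'a \<Rightarrow> real ^ 'p) \<Rightarrow> (real \<Rightarrow> 'a \<Rightarrow> real ^ 'p) \<Rightarrow> 'a \<Rightarrow> real \<times> real \<Rightarrow> real" where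
  "D_eta \<eta> W1 W2 \<omega> st = (case st of (s, t) \<Rightarrow>
     t powr (- 3/2 - \<eta>) * normIp ((t - s) *\<^sub>R W2 1 \<omega> + t *\<^sub>R W1 (s - 1) \<omega> - s *\<^sub>R W1 (t - 1) \<omega>))"

end

theory Submission
  imports Defs
begin

text \<open>
  Fix \<open>\<alpha>\<close> with \<open>1/2 < \<alpha> < 1/2 + \<eta>\<close>. By the Gaussian fourth-moment bound and a union bound,
  the probability that some level-\<open>k\<close> dyadic increment of a Brownian motion on \<open>[0, 2^m]\<close>
  exceeds \<open>2^(m\<alpha>) (9/10)^k\<close> is at most a constant times \<open>\<rho>^m q^k\<close> with \<open>\<rho>, q < 1\<close>. By
  Borel-Cantelli, almost surely these bounds hold for all large \<open>m\<close>, and chaining along the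
  dyadics bounds the path on \<open>[0, 2^m]\<close> by a multiple of \<open>2^(m\<alpha>)\<close>; hence every coordinate of
  \<open>W\<^sub>1\<close> is \<open>O((1 + u)^\<alpha>)\<close>. Then the vector inside \<open>D\<^sub>\<eta>(s, t)\<close> has norm \<open>O(t^(1+\<alpha>))\<close>,
  so \<open>D\<^sub>\<eta>(s, t) = O(t^(\<alpha>-1/2-\<eta>))\<close> tends to 0 as \<open>t \<rightarrow> \<infinity>\<close>, uniformly in \<open>s\<close>; a continuous
  function on a closed set that vanishes at infinity is bounded and uniformly continuous.
\<close>

lemma (in prob_space) normal_tail_le_fourth_moment:
  assumes X: "distributed M lborel X (normal_density 0 \<sigma>)" and "0 < \<sigma>" "0 < c"
  shows "prob {\<omega>\<in>space M. c < \<bar>X \<omega>\<bar>} \<le> 3 * \<sigma>^4 / c^4"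
proof -
  have [measurable]: "X \<in> borel_measurable M"
    using distributed_measurable[OF X] by simp
  have moment: "has_bochner_integral lborel (\<lambda>x. normal_density 0 \<sigma> x * x^4) (3 * \<sigma>^4)"
    using normal_moment_even[OF \<open>0 < \<sigma>\<close>, of 0 2] \<open>0 < \<sigma>\<close>
    by (simp add: fact_numeral field_simps power2_eq_square power4_eq_xxxx)
  have expectation: "expectation (\<lambda>\<omega>. X \<omega> ^ 4) = 3 * \<sigma>^4"
    using distributed_integral[OF X, of "\<lambda>x. x^4"] moment by (simp add: has_bochner_integral_iff)
  have "integrable M (\<lambda>\<omega>. X \<omega> ^ 4)"
    using distributed_integrable[OF X, of "\<lambda>x. x^4"] moment by (simp add: has_bochner_integral_iff)
  then have "prob {\<omega>\<in>space M. c^4 \<le> X \<omega> ^ 4} \<le> expectation (\<lambda>\<omega>. X \<omega> ^ 4) / c^4"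
    using \<open>0 < c\<close> by (intro integral_Markov_inequality_measure[where A="space M"]) auto
  moreover have "{\<omega>\<in>space M. c < \<bar>X \<omega>\<bar>} \<subseteq> {\<omega>\<in>space M. c^4 \<le> X \<omega> ^ 4}"
    using \<open>0 < c\<close> power_mono[of c "\<bar>X _\<bar>" 4] by (auto simp: power_even_abs)
  then have "prob {\<omega>\<in>space M. c < \<bar>X \<omega>\<bar>} \<le> prob {\<omega>\<in>space M. c^4 \<le> X \<omega> ^ 4}"
    by (intro finite_measure_mono) measurable
  ultimately show ?thesis
    unfolding expectation by linarith
qed

lemma abs_at_dyadic_le_sum:
  fixes f :: "real \<Rightarrow> real"
  assumes "f 0 = 0"
    and incr: "\<And>k j. j < 2^k \<Longrightarrow> \<bar>f ((real j + 1) / 2^k) - f (real j / 2^k)\<bar> \<le> c * r^k"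
  shows "j \<le> 2^n \<Longrightarrow> \<bar>f (real j / 2^n)\<bar> \<le> c * (\<Sum>k\<le>n. r^k)"
proof (induction n arbitrary: j)
  case 0
  then have "j = 0 \<or> j = 1" by auto
  then show ?case using incr[of 0 0] \<open>f 0 = 0\<close> by auto
next
  case (Suc n)
  have step_nonneg: "0 \<le> c * r ^ Suc n"
    using order_trans[OF abs_ge_zero incr[of 0 "Suc n"]] by simp
  show ?case
  proof (cases "even j")
    case True
    then obtain i where "j = 2 * i" by auto
    then have "real j / 2 ^ Suc n = real i / 2^n" "i \<le> 2^n"
      using Suc.prems by auto
    then show ?thesis using Suc.IH[of i] step_nonneg by (simp add: distrib_left)
  next
    case False
    then obtain i where j: "j = 2 * i + 1" by (metis oddE)
    then have "i < 2^n" using Suc.prems by simp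
    then have "\<bar>f (real j / 2 ^ Suc n) - f (real i / 2^n)\<bar> \<le> c * r ^ Suc n"
      using incr[of "2 * i" "Suc n"] j by (simp add: add.commute)
    then show ?thesis using Suc.IH[of i] \<open>i < 2^n\<close> by (simp add: distrib_left)
  qed
qed

lemma abs_le_of_dyadic_increments:
  fixes f :: "real \<Rightarrow> real"
  assumes "f 0 = 0" "0 \<le> r" "r < 1" and cont: "continuous_on {0..1} f"
    and incr: "\<And>k j. j < 2^k \<Longrightarrow> \<bar>f ((real j + 1) / 2^k) - f (real j / 2^k)\<bar> \<le> c * r^k"
    and u: "u \<in> {0..1}"
  shows "\<bar>f u\<bar> \<le> c / (1 - r)"
proof -
  define good where "good = {x \<in> {0..1}. \<bar>f x\<bar> \<le> c / (1 - r)}"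
  have "closed good"
    unfolding good_def by (intro continuous_on_closed_Collect_le continuous_intros cont)
  have "{0..1} \<inter> (\<Union>k m. {real m / 2^k}) \<subseteq> good"
  proof safe
    fix k m assume m: "real m / 2^k \<in> {0..(1::real)}"
    have "c \<ge> 0" using incr[of 0 0] by simp
    have "(\<Sum>i\<le>k. r^i) \<le> (\<Sum>i. r^i)"
      using \<open>0 \<le> r\<close> \<open>r < 1\<close> by (intro sum_le_suminf summable_geometric) auto
    also have "\<dots> = 1 / (1 - r)" using \<open>0 \<le> r\<close> \<open>r < 1\<close> by (simp add: suminf_geometric)
    finally have "c * (\<Sum>i\<le>k. r^i) \<le> c * (1 / (1 - r))" using \<open>c \<ge> 0\<close> by (rule mult_left_mono)
    moreover have "m \<le> 2^k" using m by (simp add: divide_le_eq_1 flip: of_nat_le_iff)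
    ultimately show "real m / 2^k \<in> good"
      using abs_at_dyadic_le_sum[OF \<open>f 0 = 0\<close> incr] m unfolding good_def by fastforce
  qed
  then have "closure ({0..1} \<inter> (\<Union>k m. {real m / 2^k})) \<subseteq> good"
    using \<open>closed good\<close> by (rule closure_minimal)
  moreover have "closure ({0..1} \<inter> (\<Union>k m. {real m / 2^k})) = {0..(1::real)}"
    by (subst closure_dyadic_rationals_in_convex_set_pos_1) auto
  ultimately show ?thesis using u unfolding good_def by auto
qed

lemma ex_power_of_two_between:
  fixes x :: real
  assumes "1 \<le> x"
  shows "\<exists>n. x \<le> 2^n \<and> 2^n \<le> 2 * x"
proof (intro exI conjI)
  define l where "l = log 2 x"
  have "0 \<le> l" "x = 2 powr l" unfolding l_def using assms by simp_all
  then have pow: "(2::real) ^ nat \<lceil>l\<rceil> = 2 powr \<lceil>l\<rceil>"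
    by (simp add: powr_realpow[symmetric])
  show "x \<le> 2 ^ nat \<lceil>l\<rceil>"
    unfolding pow \<open>x = 2 powr l\<close> by (auto intro: powr_mono)
  have "2 powr \<lceil>l\<rceil> \<le> 2 powr (l + 1)" by (intro powr_mono) linarith+
  also have "\<dots> = 2 * x" using \<open>x = 2 powr l\<close> by (simp add: powr_add)
  finally show "2 ^ nat \<lceil>l\<rceil> \<le> 2 * x" unfolding pow .
qed

lemma growth_bound_of_dyadic_increments:
  fixes f :: "real \<Rightarrow> real"
  assumes "f 0 = 0" and cont: "continuous_on {0..} f" and "0 \<le> \<alpha>" "0 \<le> r" "r < 1"
    and incr: "\<And>m k j. m0 \<le> m \<Longrightarrow> j < 2^k \<Longrightarrow>
      \<bar>f (2^m * ((real j + 1) / 2^k)) - f (2^m * (real j / 2^k))\<bar> \<le> (2 powr \<alpha>)^m * r^k"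
  shows "\<exists>K. \<forall>u\<ge>0. \<bar>f u\<bar> \<le> K * (1 + u) powr \<alpha>"
proof (intro exI allI impI)
  fix u :: real assume "0 \<le> u"
  have block: "\<bar>f x\<bar> \<le> (2 powr \<alpha>)^m / (1 - r)" if "m0 \<le> m" "x \<in> {0..2^m}" for m x
  proof -
    have "\<bar>f (2^m * (x / 2^m))\<bar> \<le> (2 powr \<alpha>)^m / (1 - r)"
      using \<open>f 0 = 0\<close> \<open>0 \<le> r\<close> \<open>r < 1\<close> incr[OF \<open>m0 \<le> m\<close>] that(2)
      by (intro abs_le_of_dyadic_increments[where f="\<lambda>y. f (2^m * y)"]
          continuous_on_compose2[OF cont] continuous_intros) auto
    then show ?thesis by simp
  qed
  obtain n :: nat where n: "1 + u \<le> 2^n" "2^n \<le> 2 * (1 + u)"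
    using ex_power_of_two_between[of "1 + u"] \<open>0 \<le> u\<close> by auto
  define m where "m = max m0 n"
  have "(2 powr \<alpha>)^m \<le> (2 powr \<alpha>)^m0 * (2 powr \<alpha>)^n"
    unfolding m_def power_add[symmetric] using \<open>0 \<le> \<alpha>\<close>
    by (intro power_increasing ge_one_powr_ge_zero) auto
  also have "(2 powr \<alpha>)^n = (2^n) powr \<alpha>"
    by (simp add: powr_power powr_powr powr_realpow[symmetric] mult.commute)
  also have "\<dots> \<le> 2 powr \<alpha> * (1 + u) powr \<alpha>"
    using n(2) \<open>0 \<le> \<alpha>\<close> by (simp add: powr_mono2 flip: powr_mult)
  finally have pow_m: "(2 powr \<alpha>)^m \<le> (2 powr \<alpha>)^m0 * 2 powr \<alpha> * (1 + u) powr \<alpha>"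
    by (simp add: mult_left_mono mult.assoc)
  have "\<bar>f u\<bar> \<le> (2 powr \<alpha>)^m / (1 - r)"
  proof (rule block)
    have "(2::real)^n \<le> 2^m" unfolding m_def by (intro power_increasing) auto
    then show "u \<in> {0..2^m}" using n(1) \<open>0 \<le> u\<close> unfolding atLeastAtMost_iff by linarith
  qed (simp add: m_def)
  also have "\<dots> \<le> (2 powr \<alpha>)^m0 * 2 powr \<alpha> * (1 + u) powr \<alpha> / (1 - r)"
    using pow_m \<open>r < 1\<close> by (simp add: divide_right_mono)
  finally show "\<bar>f u\<bar> \<le> (2 powr \<alpha>)^m0 * 2 powr \<alpha> / (1 - r) * (1 + u) powr \<alpha>"
    by simp
qed

lemma (in prob_space) prob_dyadic_increment_exceeds:
  fixes B :: "real \<Rightarrow> 'a \<Rightarrow> real"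
  assumes meas: "\<And>t. 0 \<le> t \<Longrightarrow> B t \<in> borel_measurable M"
    and incr: "\<And>a b. 0 \<le> a \<Longrightarrow> a < b \<Longrightarrow>
      distributed M lborel (\<lambda>\<omega>. B b \<omega> - B a \<omega>) (normal_density 0 (sqrt (b - a)))"
    and "0 < \<beta>" "0 < r"
  shows "prob (\<Union>j<(2::nat)^k. {\<omega>\<in>space M.
      \<beta>^m * r^k < \<bar>B (2^m * ((real j + 1) / 2^k)) \<omega> - B (2^m * (real j / 2^k)) \<omega>\<bar>})
    \<le> 3 * (4 / \<beta>^4)^m * (1 / (2 * r^4))^k"
    (is "prob (\<Union>j<_. ?E j) \<le> _")
proof -
  have E_sets: "?E j \<in> events" for j
  proof -
    have [measurable]: "B (2^m * ((real j + 1) / 2^k)) \<in> borel_measurable M"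
      "B (2^m * (real j / 2^k)) \<in> borel_measurable M"
      by (simp_all add: meas)
    show ?thesis by measurable
  qed
  define h :: real where "h = 2^m / 2^k"
  have "(sqrt h)^4 = h^2"
    using power_mult[of "sqrt h" 2 2] by (simp add: h_def)
  have prob_E: "prob (?E j) \<le> 3 * h^2 / (\<beta>^m * r^k)^4" for j
  proof -
    have "0 \<le> 2^m * (real j / 2^k)" "2^m * (real j / 2^k) < 2^m * ((real j + 1) / 2^k)"
      by (simp_all add: divide_strict_right_mono)
    moreover have "2^m * ((real j + 1) / 2^k) - 2^m * (real j / 2^k) = h"
      by (simp add: h_def field_simps)
    ultimately have "distributed M lborel (\<lambda>\<omega>. B (2^m * ((real j + 1) / 2^k)) \<omega> - B (2^m * (real j / 2^k)) \<omega>)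
        (normal_density 0 (sqrt h))"
      using incr by metis
    from normal_tail_le_fourth_moment[OF this] show ?thesis
      using \<open>(sqrt h)^4 = h^2\<close> \<open>0 < \<beta>\<close> \<open>0 < r\<close> by (simp add: h_def)
  qed
  have "prob (\<Union>j<(2::nat)^k. ?E j) \<le> (\<Sum>j<(2::nat)^k. 3 * h^2 / (\<beta>^m * r^k)^4)"
    by (intro order_trans[OF finite_measure_subadditive_finite] sum_mono prob_E)
      (use E_sets in \<open>simp_all add: image_subset_iff\<close>)
  also have "\<dots> = 3 * (4 / \<beta>^4)^m * (1 / (2 * r^4))^k"
  proof -
    have "(4::real)^m = (2^m)^2" by (simp add: power2_eq_square flip: power_mult_distrib)
    then show ?thesis unfolding h_def using \<open>0 < \<beta>\<close> \<open>0 < r\<close>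
      by (simp add: power_divide power_mult_distrib field_simps power2_eq_square flip: power_mult)
  qed
  finally show ?thesis .
qed

lemma (in prob_space) prob_UN_le_geometric:
  assumes "\<And>k. F k \<in> events" and prob_F: "\<And>k. prob (F k) \<le> C * q^k" and "0 \<le> q" "q < 1"
  shows "prob (\<Union>k. F k) \<le> C / (1 - q)"
proof -
  have geometric: "summable (\<lambda>k. C * q^k)" "(\<Sum>k. C * q^k) = C / (1 - q)"
    using \<open>0 \<le> q\<close> \<open>q < 1\<close> by (simp_all add: suminf_mult summable_geometric suminf_geometric)
  have summable: "summable (\<lambda>k. prob (F k))"
    using geometric(1) by (rule summable_comparison_test') (simp add: prob_F)
  then have "prob (\<Union>k. F k) \<le> (\<Sum>k. prob (F k))"
    using assms(1) by (intro finite_measure_subadditive_countably) auto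
  also have "\<dots> \<le> (\<Sum>k. C * q^k)"
    using summable geometric(1) by (intro suminf_le prob_F)
  finally show ?thesis unfolding geometric(2) .
qed

lemma (in prob_space) AE_eventually_dyadic_increments_le:
  fixes B :: "real \<Rightarrow> 'a \<Rightarrow> real"
  assumes meas: "\<And>t. 0 \<le> t \<Longrightarrow> B t \<in> borel_measurable M"
    and incr: "\<And>a b. 0 \<le> a \<Longrightarrow> a < b \<Longrightarrow>
      distributed M lborel (\<lambda>\<omega>. B b \<omega> - B a \<omega>) (normal_density 0 (sqrt (b - a)))"
    and "1/2 < \<alpha>" "0 < r" "1 < 2 * r^4"
  shows "AE \<omega> in M. \<forall>\<^sub>F m in sequentially. \<forall>k j. j < (2::nat)^k \<longrightarrow>
    \<bar>B (2^m * ((real j + 1) / 2^k)) \<omega> - B (2^m * (real j / 2^k)) \<omega>\<bar> \<le> (2 powr \<alpha>)^m * r^k"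
proof -
  define \<rho> where "\<rho> = 4 / (2 powr \<alpha>)^4"
  define q where "q = 1 / (2 * r^4)"
  have "(4::real) < 2 powr (4 * \<alpha>)"
    using powr_less_mono[of 2 "4 * \<alpha>" 2] \<open>1/2 < \<alpha>\<close> by simp
  then have \<rho>: "0 < \<rho>" "\<rho> < 1" unfolding \<rho>_def by (simp_all add: powr_power)
  have q: "0 < q" "q < 1" unfolding q_def using \<open>0 < r\<close> \<open>1 < 2 * r^4\<close> by auto
  define F where "F m k = (\<Union>j<(2::nat)^k. {\<omega>\<in>space M.
    (2 powr \<alpha>)^m * r^k < \<bar>B (2^m * ((real j + 1) / 2^k)) \<omega> - B (2^m * (real j / 2^k)) \<omega>\<bar>})"
    for m k
  define A where "A m = (\<Union>k. F m k)" for m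
  have F_sets [measurable]: "F m k \<in> events" for m k
  proof -
    have [measurable]: "B (2^m * ((real j + 1) / 2^k)) \<in> borel_measurable M"
      "B (2^m * (real j / 2^k)) \<in> borel_measurable M" for j
      by (simp_all add: meas)
    show ?thesis unfolding F_def by measurable
  qed
  have A_sets [measurable]: "A m \<in> events" for m
    unfolding A_def by measurable
  have "0 < (2::real) powr \<alpha>" by simp
  from prob_dyadic_increment_exceeds[OF meas incr this \<open>0 < r\<close>]
  have prob_level: "prob (F m k) \<le> 3 * \<rho>^m * q^k" for m k
    unfolding F_def \<rho>_def q_def .
  have prob_A: "prob (A m) \<le> 3 * \<rho>^m / (1 - q)" for m
    unfolding A_def using q by (intro prob_UN_le_geometric F_sets prob_level) auto
  have "summable (\<lambda>m. 3 / (1 - q) * \<rho>^m)"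
    using \<rho> by (intro summable_mult summable_geometric) auto
  then have "summable (\<lambda>m. prob (A m))"
    by (rule summable_comparison_test') (use prob_A in simp)
  then have "AE \<omega> in M. \<forall>\<^sub>F m in sequentially. \<omega> \<in> space M - A m"
    by (intro borel_cantelli_AE1) (auto simp: emeasure_eq_measure)
  then show ?thesis
  proof (rule AE_mp, intro AE_I2 impI)
    fix \<omega> assume "\<forall>\<^sub>F m in sequentially. \<omega> \<in> space M - A m" "\<omega> \<in> space M"
    then show "\<forall>\<^sub>F m in sequentially. \<forall>k j. j < (2::nat)^k \<longrightarrow>
      \<bar>B (2^m * ((real j + 1) / 2^k)) \<omega> - B (2^m * (real j / 2^k)) \<omega>\<bar> \<le> (2 powr \<alpha>)^m * r^k"
      by (elim eventually_mono) (auto simp: A_def F_def not_less)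
  qed
qed

lemma indep_std_BMs_increment_distributed:
  assumes "indep_std_BMs M I B" "i \<in> I" "0 \<le> a" "a < b"
  shows "distributed M lborel (\<lambda>\<omega>. B i b \<omega> - B i a \<omega>) (normal_density 0 (sqrt (b - a)))"
proof -
  define ts :: "nat \<Rightarrow> real" where "ts k = (if k = 0 then a else b)" for k
  have "0 \<le> ts 0 \<and> (\<forall>k<1. ts k < ts (Suc k))"
    using assms(3,4) by (simp add: ts_def)
  then have "distributed M lborel (\<lambda>\<omega>. B i (ts (Suc 0)) \<omega> - B i (ts 0) \<omega>)
      (normal_density 0 (sqrt (ts (Suc 0) - ts 0)))"
    using assms(1,2) unfolding indep_std_BMs_def by blast
  then show ?thesis by (simp add: ts_def)
qed

lemma AE_indep_std_BMs_growth:
  assumes BMs: "indep_std_BMs M I B" and "i \<in> I" "1/2 < \<alpha>"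
  shows "AE \<omega> in M. \<exists>K. \<forall>u\<ge>0. \<bar>B i u \<omega>\<bar> \<le> K * (1 + u) powr \<alpha>"
proof -
  interpret prob_space M using BMs by (simp add: indep_std_BMs_def)
  have meas: "\<And>t. 0 \<le> t \<Longrightarrow> B i t \<in> borel_measurable M"
    using BMs \<open>i \<in> I\<close> by (simp add: indep_std_BMs_def)
  have "AE \<omega> in M. \<forall>\<^sub>F m in sequentially. \<forall>k j. j < (2::nat)^k \<longrightarrow>
    \<bar>B i (2^m * ((real j + 1) / 2^k)) \<omega> - B i (2^m * (real j / 2^k)) \<omega>\<bar> \<le> (2 powr \<alpha>)^m * (9/10)^k"
    \<comment> \<open>any \<open>r < 1\<close> with \<open>2 r^4 > 1\<close> works: \<open>r < 1\<close> for the chaining, \<open>2 r^4 > 1\<close> to beat the \<open>2^k\<close> increments of level \<open>k\<close>\<close>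
    using \<open>1/2 < \<alpha>\<close>
    by (intro AE_eventually_dyadic_increments_le[OF meas indep_std_BMs_increment_distributed[OF BMs \<open>i \<in> I\<close>]])
      (simp_all add: power4_eq_xxxx)
  then show ?thesis
  proof (rule AE_mp, intro AE_I2 impI)
    fix \<omega> assume "\<omega> \<in> space M" and "\<forall>\<^sub>F m in sequentially. \<forall>k j. j < (2::nat)^k \<longrightarrow>
      \<bar>B i (2^m * ((real j + 1) / 2^k)) \<omega> - B i (2^m * (real j / 2^k)) \<omega>\<bar> \<le> (2 powr \<alpha>)^m * (9/10)^k"
    then obtain m0 where "\<And>m k j. m0 \<le> m \<Longrightarrow> j < 2^k \<Longrightarrow>
      \<bar>B i (2^m * ((real j + 1) / 2^k)) \<omega> - B i (2^m * (real j / 2^k)) \<omega>\<bar> \<le> (2 powr \<alpha>)^m * (9/10)^k"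
      unfolding eventually_sequentially by blast
    moreover have "B i 0 \<omega> = 0" "continuous_on {0..} (\<lambda>u. B i u \<omega>)"
      using BMs \<open>i \<in> I\<close> \<open>\<omega> \<in> space M\<close> by (simp_all add: indep_std_BMs_def)
    ultimately show "\<exists>K. \<forall>u\<ge>0. \<bar>B i u \<omega>\<bar> \<le> K * (1 + u) powr \<alpha>"
      using \<open>1/2 < \<alpha>\<close> by (intro growth_bound_of_dyadic_increments[where r="9/10"]) auto
  qed
qed

lemma AE_indep_std_BM_pair_first_growth:
  fixes W1 W2 :: "real \<Rightarrow> 'a \<Rightarrow> real ^ 'p"
  assumes "indep_std_BM_pair M W1 W2" "1/2 < \<alpha>"
  shows "AE \<omega> in M. continuous_on {0..} (\<lambda>u. W1 u \<omega>) \<and>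
    (\<exists>K. \<forall>u\<ge>0. norm (W1 u \<omega>) \<le> K * (1 + u) powr \<alpha>)"
proof -
  define B where "B = (\<lambda>(j, i) t \<omega>. (if j then W2 t \<omega> else W1 t \<omega>) $ i)"
  have BMs: "indep_std_BMs M (UNIV :: (bool \<times> 'p) set) B"
    using assms(1) unfolding indep_std_BM_pair_def B_def .
  interpret prob_space M using BMs by (simp add: indep_std_BMs_def)
  have "AE \<omega> in M. \<exists>K. \<forall>u\<ge>0. \<bar>W1 u \<omega> $ i\<bar> \<le> K * (1 + u) powr \<alpha>" for i
    using AE_indep_std_BMs_growth[OF BMs _ \<open>1/2 < \<alpha>\<close>, of "(False, i)"] by (simp add: B_def)
  then have "AE \<omega> in M. \<forall>i\<in>UNIV. \<exists>K. \<forall>u\<ge>0. \<bar>W1 u \<omega> $ i\<bar> \<le> K * (1 + u) powr \<alpha>"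
    by (intro AE_finite_allI) simp_all
  then show ?thesis
  proof (rule AE_mp, intro AE_I2 impI conjI)
    fix \<omega> assume "\<omega> \<in> space M"
      and "\<forall>i\<in>UNIV. \<exists>K. \<forall>u\<ge>0. \<bar>W1 u \<omega> $ i\<bar> \<le> K * (1 + u) powr \<alpha>"
    then have "\<forall>i. \<exists>K. \<forall>u\<ge>0. \<bar>W1 u \<omega> $ i\<bar> \<le> K * (1 + u) powr \<alpha>"
      by simp
    then obtain K where K: "\<And>i u. 0 \<le> u \<Longrightarrow> \<bar>W1 u \<omega> $ i\<bar> \<le> K i * (1 + u) powr \<alpha>"
      by (metis choice)
    have "continuous_on {0..} (\<lambda>u. B (False, i) u \<omega>)" for i
      using BMs \<open>\<omega> \<in> space M\<close> unfolding indep_std_BMs_def by blast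
    then have "continuous_on {0..} (\<lambda>u. W1 u \<omega> $ i)" for i
      by (simp add: B_def)
    then show "continuous_on {0..} (\<lambda>u. W1 u \<omega>)"
      using continuous_on_vec_lambda[of "{0..}" "\<lambda>i u. W1 u \<omega> $ i"] by simp
    have "norm (W1 u \<omega>) \<le> (\<Sum>i\<in>UNIV. K i) * (1 + u) powr \<alpha>" if "0 \<le> u" for u
    proof -
      have "norm (W1 u \<omega>) \<le> (\<Sum>i\<in>UNIV. \<bar>W1 u \<omega> $ i\<bar>)" by (rule norm_le_l1_cart)
      also have "\<dots> \<le> (\<Sum>i\<in>UNIV. K i * (1 + u) powr \<alpha>)" by (intro sum_mono K that)
      finally show ?thesis by (simp add: sum_distrib_right)
    qed
    then show "\<exists>K. \<forall>u\<ge>0. norm (W1 u \<omega>) \<le> K * (1 + u) powr \<alpha>" by blast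
  qed
qed

lemma bounded_image_if_vanishing_at_infinity:
  fixes f :: "'a::euclidean_space \<Rightarrow> 'b::real_normed_vector"
  assumes "closed S" "continuous_on S f"
    and vanish: "\<And>e. 0 < e \<Longrightarrow> \<exists>R. \<forall>x\<in>S. R \<le> norm x \<longrightarrow> norm (f x) < e"
  shows "bounded (f ` S)"
proof -
  obtain R where R: "\<And>x. x \<in> S \<Longrightarrow> R \<le> norm x \<Longrightarrow> norm (f x) < 1"
    using vanish[of 1] by auto
  have "compact (S \<inter> cball 0 R)"
    using \<open>closed S\<close> by (intro closed_Int_compact compact_cball)
  then have "bounded (f ` (S \<inter> cball 0 R))"
    by (intro compact_imp_bounded compact_continuous_image continuous_on_subset[OF \<open>continuous_on S f\<close>]) auto
  moreover have "f ` S \<subseteq> f ` (S \<inter> cball 0 R) \<union> ball 0 1"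
  proof (rule image_subsetI)
    fix x assume "x \<in> S"
    then show "f x \<in> f ` (S \<inter> cball 0 R) \<union> ball 0 1"
      using R[of x] by (cases "R \<le> norm x") auto
  qed
  ultimately show ?thesis
    by (metis bounded_Un bounded_ball bounded_subset)
qed

lemma uniformly_continuous_if_vanishing_at_infinity:
  fixes f :: "'a::euclidean_space \<Rightarrow> 'b::real_normed_vector"
  assumes "closed S" "continuous_on S f"
    and vanish: "\<And>e. 0 < e \<Longrightarrow> \<exists>R. \<forall>x\<in>S. R \<le> norm x \<longrightarrow> norm (f x) < e"
  shows "uniformly_continuous_on S f"
  unfolding uniformly_continuous_on_def
proof (intro allI impI)
  fix e :: real assume "0 < e"
  then obtain R where R: "\<And>x. x \<in> S \<Longrightarrow> R \<le> norm x \<Longrightarrow> norm (f x) < e / 2"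
    using vanish[of "e / 2"] by auto
  define C where "C = S \<inter> cball 0 (R + 1)"
  have "compact C"
    unfolding C_def using \<open>closed S\<close> by (intro closed_Int_compact compact_cball)
  then have "uniformly_continuous_on C f"
    by (intro compact_uniformly_continuous continuous_on_subset[OF \<open>continuous_on S f\<close>]) (auto simp: C_def)
  then obtain d where "0 < d" and d: "\<And>x x'. x \<in> C \<Longrightarrow> x' \<in> C \<Longrightarrow> dist x' x < d \<Longrightarrow> dist (f x') (f x) < e"
    unfolding uniformly_continuous_on_def using \<open>0 < e\<close> by metis
  show "\<exists>d>0. \<forall>x\<in>S. \<forall>x'\<in>S. dist x' x < d \<longrightarrow> dist (f x') (f x) < e"
  proof (intro exI[of _ "min d 1"] conjI ballI impI)
    fix x x' assume "x \<in> S" "x' \<in> S" "dist x' x < min d 1"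
    show "dist (f x') (f x) < e"
    proof (cases "x \<in> C \<and> x' \<in> C")
      case True
      then show ?thesis using d \<open>dist x' x < min d 1\<close> by simp
    next
      case False
      then have "R + 1 < norm x \<or> R + 1 < norm x'"
        using \<open>x \<in> S\<close> \<open>x' \<in> S\<close> by (auto simp: C_def)
      moreover have "norm x' - norm x \<le> dist x' x" "norm x - norm x' \<le> dist x' x"
        using norm_triangle_ineq2[of x' x] norm_triangle_ineq2[of x x']
        by (simp_all add: dist_norm norm_minus_commute)
      ultimately have "R \<le> norm x" "R \<le> norm x'"
        using \<open>dist x' x < min d 1\<close> by linarith+
      then show ?thesis
        using R[OF \<open>x \<in> S\<close>] R[OF \<open>x' \<in> S\<close>] norm_triangle_ineq4[of "f x'" "f x"]
        by (simp add: dist_norm)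
    qed
  qed (use \<open>0 < d\<close> in simp)
qed

lemma normIp_le_norm: "normIp (y :: real ^ 'n) \<le> norm y"
proof -
  have "1 \<le> real CARD('n)"
    by (simp add: Suc_leI)
  then have "y \<bullet> y / real CARD('n) \<le> y \<bullet> y"
    using divide_left_mono[of 1 "real CARD('n)" "y \<bullet> y"] by simp
  then show ?thesis
    unfolding normIp_def norm_eq_sqrt_inner by (rule real_sqrt_le_mono)
qed

lemma continuous_on_D_eta:
  assumes "continuous_on {0..} (\<lambda>u. V u \<omega>)"
  shows "continuous_on {(s, t). 1 \<le> s \<and> s \<le> t} (D_eta \<eta> V U \<omega>)"
proof -
  have "continuous_on {(s, t). 1 \<le> s \<and> s \<le> t} (\<lambda>x. V (fst x - 1) \<omega>)"
    "continuous_on {(s, t). 1 \<le> s \<and> s \<le> t} (\<lambda>x. V (snd x - 1) \<omega>)"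
    by (auto intro!: continuous_on_compose2[OF assms] continuous_intros)
  then show ?thesis
    unfolding D_eta_def normIp_def case_prod_beta
    by (intro continuous_intros) auto
qed

lemma D_eta_le:
  fixes V U :: "real \<Rightarrow> 'a \<Rightarrow> real ^ 'p"
  assumes growth: "\<And>u. 0 \<le> u \<Longrightarrow> norm (V u \<omega>) \<le> K * (1 + u) powr \<alpha>"
    and "0 \<le> \<alpha>" "1 \<le> s" "s \<le> t"
  shows "D_eta \<eta> V U \<omega> (s, t) \<le> norm (U 1 \<omega>) * t powr (-1/2 - \<eta>) + 2 * K * t powr (\<alpha> - 1/2 - \<eta>)"
proof -
  have "0 \<le> K" using order_trans[OF norm_ge_zero growth[of 0]] by simp
  have bound_s: "norm (V (s - 1) \<omega>) \<le> K * t powr \<alpha>"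
    using growth[of "s - 1"] \<open>0 \<le> K\<close> \<open>0 \<le> \<alpha>\<close> \<open>1 \<le> s\<close> \<open>s \<le> t\<close>
    by (smt (verit) mult_left_mono powr_mono2)
  have bound_t: "norm (V (t - 1) \<omega>) \<le> K * t powr \<alpha>"
    using growth[of "t - 1"] \<open>1 \<le> s\<close> \<open>s \<le> t\<close> by simp
  have "norm ((t - s) *\<^sub>R U 1 \<omega> + t *\<^sub>R V (s - 1) \<omega> - s *\<^sub>R V (t - 1) \<omega>)
      \<le> t * (norm (U 1 \<omega>) + 2 * K * t powr \<alpha>)"
  proof -
    have "norm ((t - s) *\<^sub>R U 1 \<omega> + t *\<^sub>R V (s - 1) \<omega> - s *\<^sub>R V (t - 1) \<omega>)
        \<le> (t - s) * norm (U 1 \<omega>) + t * norm (V (s - 1) \<omega>) + s * norm (V (t - 1) \<omega>)"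
      using norm_triangle_ineq4[of "(t - s) *\<^sub>R U 1 \<omega> + t *\<^sub>R V (s - 1) \<omega>" "s *\<^sub>R V (t - 1) \<omega>"]
        norm_triangle_ineq[of "(t - s) *\<^sub>R U 1 \<omega>" "t *\<^sub>R V (s - 1) \<omega>"] \<open>1 \<le> s\<close> \<open>s \<le> t\<close>
      by simp
    also have "\<dots> \<le> t * norm (U 1 \<omega>) + t * (K * t powr \<alpha>) + t * (K * t powr \<alpha>)"
      using \<open>1 \<le> s\<close> \<open>s \<le> t\<close> bound_s bound_t by (intro add_mono mult_mono) auto
    finally show ?thesis by (simp add: algebra_simps)
  qed
  then have "D_eta \<eta> V U \<omega> (s, t) \<le> t powr (-3/2 - \<eta>) * (t * (norm (U 1 \<omega>) + 2 * K * t powr \<alpha>))"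
    unfolding D_eta_def by (auto intro!: mult_left_mono order_trans[OF normIp_le_norm])
  also have "\<dots> = t powr (-1/2 - \<eta>) * (norm (U 1 \<omega>) + 2 * K * t powr \<alpha>)"
    using powr_add[of t "-3/2 - \<eta>" 1] \<open>1 \<le> s\<close> \<open>s \<le> t\<close> by simp
  also have "\<dots> = norm (U 1 \<omega>) * t powr (-1/2 - \<eta>) + 2 * K * t powr (\<alpha> - 1/2 - \<eta>)"
    using powr_add[of t "-1/2 - \<eta>" \<alpha>] by (simp add: algebra_simps)
  finally show ?thesis .
qed

lemma D_eta_vanishing_at_infinity:
  fixes V U :: "real \<Rightarrow> 'a \<Rightarrow> real ^ 'p"
  assumes growth: "\<And>u. 0 \<le> u \<Longrightarrow> norm (V u \<omega>) \<le> K * (1 + u) powr \<alpha>"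
    and "0 \<le> \<alpha>" "\<alpha> < 1/2 + \<eta>" "0 < e"
  shows "\<exists>R. \<forall>x\<in>{(s, t). 1 \<le> s \<and> s \<le> t}. R \<le> norm x \<longrightarrow> norm (D_eta \<eta> V U \<omega> x) < e"
proof -
  define g where "g t = norm (U 1 \<omega>) * t powr (-1/2 - \<eta>) + 2 * K * t powr (\<alpha> - 1/2 - \<eta>)" for t
  have "(g \<longlongrightarrow> 0) at_top"
  proof -
    have "((\<lambda>t. t powr (-1/2 - \<eta>)) \<longlongrightarrow> 0) at_top" "((\<lambda>t. t powr (\<alpha> - 1/2 - \<eta>)) \<longlongrightarrow> 0) at_top"
      using assms(2,3) by (auto intro!: tendsto_neg_powr filterlim_ident)
    from tendsto_add[OF tendsto_mult_right_zero[OF this(1)] tendsto_mult_right_zero[OF this(2)]]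
    show ?thesis unfolding g_def by simp
  qed
  then have "\<forall>\<^sub>F t in at_top. g t < e"
    using \<open>0 < e\<close> by (rule order_tendstoD)
  then obtain T where T: "\<And>t. T \<le> t \<Longrightarrow> g t < e"
    unfolding eventually_at_top_linorder by blast
  show ?thesis
  proof (intro exI[of _ "2 * T"] ballI impI)
    fix x :: "real \<times> real" assume "x \<in> {(s, t). 1 \<le> s \<and> s \<le> t}" and "2 * T \<le> norm x"
    then obtain s t where x: "x = (s, t)" "1 \<le> s" "s \<le> t" by auto
    have "norm x \<le> 2 * t" using norm_Pair_le[of s t] x by simp
    then have "g t < e" using \<open>2 * T \<le> norm x\<close> by (intro T) simp
    moreover have "0 \<le> D_eta \<eta> V U \<omega> x"
      unfolding D_eta_def normIp_def x by simp
    ultimately show "norm (D_eta \<eta> V U \<omega> x) < e"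
      using D_eta_le[where V=V and U=U and \<omega>=\<omega> and \<eta>=\<eta>, OF growth \<open>0 \<le> \<alpha>\<close> x(2,3)] unfolding g_def x by simp
  qed
qed

theorem lemmaA2:
  fixes M :: "'a measure" and W1 W2 :: "real \<Rightarrow> 'a \<Rightarrow> real ^ 'p" and \<eta> :: real
  assumes "indep_std_BM_pair M W1 W2" and "\<eta> > 0"
  shows "AE \<omega> in M. bounded (D_eta \<eta> W1 W2 \<omega> ` {(s, t). 1 \<le> s \<and> s \<le> t})
                 \<and> uniformly_continuous_on {(s, t). 1 \<le> s \<and> s \<le> t} (D_eta \<eta> W1 W2 \<omega>)"
proof -
  define \<alpha> where "\<alpha> = 1/2 + \<eta>/2"
  have "0 \<le> \<alpha>" "1/2 < \<alpha>" "\<alpha> < 1/2 + \<eta>"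
    using \<open>\<eta> > 0\<close> by (simp_all add: \<alpha>_def)
  have closed: "closed {(s, t). 1 \<le> s \<and> s \<le> (t::real)}"
    unfolding case_prod_beta by (intro closed_Collect_conj closed_Collect_le continuous_intros)
  have "AE \<omega> in M. continuous_on {0..} (\<lambda>u. W1 u \<omega>) \<and>
      (\<exists>K. \<forall>u\<ge>0. norm (W1 u \<omega>) \<le> K * (1 + u) powr \<alpha>)"
    using AE_indep_std_BM_pair_first_growth[OF assms(1) \<open>1/2 < \<alpha>\<close>] .
  then show ?thesis
  proof (rule eventually_mono, elim conjE exE)
    fix \<omega> K
    assume cont: "continuous_on {0..} (\<lambda>u. W1 u \<omega>)"
      and growth: "\<forall>u\<ge>0. norm (W1 u \<omega>) \<le> K * (1 + u) powr \<alpha>"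
    have "continuous_on {(s, t). 1 \<le> s \<and> s \<le> t} (D_eta \<eta> W1 W2 \<omega>)"
      using cont by (rule continuous_on_D_eta)
    moreover have "\<exists>R. \<forall>x\<in>{(s, t). 1 \<le> s \<and> s \<le> t}. R \<le> norm x \<longrightarrow> norm (D_eta \<eta> W1 W2 \<omega> x) < e"
      if "0 < e" for e
      using growth \<open>0 \<le> \<alpha>\<close> \<open>\<alpha> < 1/2 + \<eta>\<close> that by (intro D_eta_vanishing_at_infinity) auto
    ultimately show "bounded (D_eta \<eta> W1 W2 \<omega> ` {(s, t). 1 \<le> s \<and> s \<le> t})
                 \<and> uniformly_continuous_on {(s, t). 1 \<le> s \<and> s \<le> t} (D_eta \<eta> W1 W2 \<omega>)"
      using bounded_image_if_vanishing_at_infinity[OF closed]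
        uniformly_continuous_if_vanishing_at_infinity[OF closed] by blast
  qed
qed

end
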